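(* Under Assumption (A), for every $t\geq 0$ and every $f\in C[0,1]$, \[ \lim_{N\to+\infty}\mathrm{Var}\big(\mu_t^N(f)\big)=\lim_{N\to+\infty}\mathrm{Var}\big(\theta_t^N(f)\big)=0. \]
   Context: Let $\lambda\in C([0,1]\times[0,1])$ and $\psi\in C[0,1]$ be positive functions. For $N\geq 1$, the $N$-urn SIR model $\{\xi_t^N\}_{t\geq 0}$ is the continuous-time Markov process on $\{-1,0,1\}^N$ (state $0$ = susceptible, $1$ = infected, $-1$ = removed) in which an infected urn $i$ becomes removed at rate $\psi(i/N)$, a susceptible urn $i$ becomes infected at rate $\frac1N\sum_{j=1}^N\lambda(\frac iN,\frac jN)1_{\{\xi(j)=1\}}$, and removed urns stay removed forever. Assumption (A): $\{\xi_0^N(i)\}_{i=1}^N$ are independent and there is $\phi\in C[0,1]$ with $P(\xi_0^N(i)=1)=\phi(\frac iN)=1-P(\xi_0^N(i)=0)$. Write $S_t^N(i)=1_{\{\xi_t^N(i)=0\}}$, $I_t^N(i)=1_{\{\xi_t^N(i)=1\}}$, $\mu_t^N(f)=\frac1N\sum_{i=1}^NI_t^N(i)f(\frac iN)$, $\theta_t^N(f)=\frac1N\sum_{i=1}^NS_t^N(i)f(\frac iN)$. *)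

theory Defs
  imports "HOL-Analysis.Analysis"
begin

text \<open>The law at time t is given by the
  transition semigroup exp(tQ) of the generator matrix Q.\<close>

definition sir_states :: "nat \<Rightarrow> (nat \<Rightarrow> int) set" where
  "sir_states N = {xi. (\<forall>i\<in>{1..N}. xi i \<in> {-1, 0, 1}) \<and> (\<forall>i. i \<notin> {1..N} \<longrightarrow> xi i = 0)}"

definition sir_rate ::
  "(real \<Rightarrow> real \<Rightarrow> real) \<Rightarrow> (real \<Rightarrow> real) \<Rightarrow> nat \<Rightarrow> (nat \<Rightarrow> int) \<Rightarrow> (nat \<Rightarrow> int) \<Rightarrow> real" where
  "sir_rate lam psi N xi eta =
     (\<Sum>i\<in>{1..N}.
        (if xi i = 1 \<and> eta = xi(i := -1) then psi (real i / real N) else 0)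
      + (if xi i = 0 \<and> eta = xi(i := 1)
         then (1 / real N) * (\<Sum>j\<in>{1..N}. lam (real i / real N) (real j / real N) * (if xi j = 1 then 1 else 0))
         else 0))"

definition sir_gen ::
  "(real \<Rightarrow> real \<Rightarrow> real) \<Rightarrow> (real \<Rightarrow> real) \<Rightarrow> nat \<Rightarrow> (nat \<Rightarrow> int) \<Rightarrow> (nat \<Rightarrow> int) \<Rightarrow> real" where
  "sir_gen lam psi N xi eta =
     (if xi = eta then - (\<Sum>zeta\<in>sir_states N - {xi}. sir_rate lam psi N xi zeta)
      else sir_rate lam psi N xi eta)"

fun matpow :: "'s set \<Rightarrow> ('s \<Rightarrow> 's \<Rightarrow> real) \<Rightarrow> nat \<Rightarrow> 's \<Rightarrow> 's \<Rightarrow> real" where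
  "matpow S Q 0 x y = (if x = y then 1 else 0)"
| "matpow S Q (Suc k) x y = (\<Sum>z\<in>S. matpow S Q k x z * Q z y)"

definition sir_trans ::
  "(real \<Rightarrow> real \<Rightarrow> real) \<Rightarrow> (real \<Rightarrow> real) \<Rightarrow> nat \<Rightarrow> real \<Rightarrow> (nat \<Rightarrow> int) \<Rightarrow> (nat \<Rightarrow> int) \<Rightarrow> real" where
  "sir_trans lam psi N t xi eta =
     (\<Sum>k. t ^ k / fact k * matpow (sir_states N) (sir_gen lam psi N) k xi eta)"

text \<open>Initial law under Assumption (A): independent urns, infected with
  probability phi(i/N), susceptible otherwise.\<close>
definition sir_init :: "(real \<Rightarrow> real) \<Rightarrow> nat \<Rightarrow> (nat \<Rightarrow> int) \<Rightarrow> real" where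
  "sir_init phi N xi =
     (\<Prod>i\<in>{1..N}. if xi i = 1 then phi (real i / real N)
                   else if xi i = 0 then 1 - phi (real i / real N) else 0)"

definition sir_expect ::
  "(real \<Rightarrow> real \<Rightarrow> real) \<Rightarrow> (real \<Rightarrow> real) \<Rightarrow> (real \<Rightarrow> real) \<Rightarrow> nat \<Rightarrow> real
   \<Rightarrow> ((nat \<Rightarrow> int) \<Rightarrow> real) \<Rightarrow> real" where
  "sir_expect lam psi phi N t F =
     (\<Sum>xi0\<in>sir_states N. \<Sum>xi\<in>sir_states N.
        sir_init phi N xi0 * sir_trans lam psi N t xi0 xi * F xi)"

definition sir_var ::
  "(real \<Rightarrow> real \<Rightarrow> real) \<Rightarrow> (real \<Rightarrow> real) \<Rightarrow> (real \<Rightarrow> real) \<Rightarrow> nat \<Rightarrow> real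
   \<Rightarrow> ((nat \<Rightarrow> int) \<Rightarrow> real) \<Rightarrow> real" where
  "sir_var lam psi phi N t F =
     sir_expect lam psi phi N t (\<lambda>xi. (F xi)\<^sup>2) - (sir_expect lam psi phi N t F)\<^sup>2"

definition mu_emp :: "nat \<Rightarrow> (real \<Rightarrow> real) \<Rightarrow> (nat \<Rightarrow> int) \<Rightarrow> real" where
  "mu_emp N f xi = (1 / real N) * (\<Sum>i\<in>{1..N}. (if xi i = 1 then 1 else 0) * f (real i / real N))"

definition theta_emp :: "nat \<Rightarrow> (real \<Rightarrow> real) \<Rightarrow> (nat \<Rightarrow> int) \<Rightarrow> real" where
  "theta_emp N f xi = (1 / real N) * (\<Sum>i\<in>{1..N}. (if xi i = 0 then 1 else 0) * f (real i / real N))"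

end

theory Submission
  imports Defs
begin

text \<open>The law at time \<open>t\<close> is the limit, as \<open>n \<rightarrow> \<infinity>\<close>, of the law after \<open>n\<close> steps of the
  Euler chain with kernel \<open>K = I + (t/n) Q\<close>. By the law of total variance, the variance of \<open>F\<close>
  after \<open>n\<close> steps is the variance of \<open>K\<^sup>n F\<close> under the initial law plus the expected one-step
  conditional variances of the functions \<open>K\<^sup>j F\<close>, \<open>j < n\<close>. If changing one urn changes \<open>F\<close>
  by at most \<open>c\<close>, then one Euler step keeps this property with \<open>c\<close> replaced by \<open>(1 + C t/n) c\<close>,
  so all \<open>K\<^sup>j F\<close> have constant \<open>exp (C t) c\<close>. Each one-step conditional variance is then
  \<open>O((t/n) N c\<^sup>2)\<close>, and under the product initial law the variance is at most \<open>N c\<^sup>2\<close>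
  (Efron--Stein, resampling one urn at a time). For \<open>\<mu>\<^sup>N(f)\<close> and \<open>\<theta>\<^sup>N(f)\<close> one can take
  \<open>c = sup |f| / N\<close>, so both variances are \<open>O(1/N)\<close>.\<close>

section \<open>Markov kernels on a finite state space\<close>

definition expect_on :: "'s set \<Rightarrow> ('s \<Rightarrow> real) \<Rightarrow> ('s \<Rightarrow> real) \<Rightarrow> real" where
  "expect_on S \<mu> G = (\<Sum>x\<in>S. \<mu> x * G x)"

definition variance_on :: "'s set \<Rightarrow> ('s \<Rightarrow> real) \<Rightarrow> ('s \<Rightarrow> real) \<Rightarrow> real" where
  "variance_on S \<mu> G = expect_on S \<mu> (\<lambda>x. (G x)\<^sup>2) - (expect_on S \<mu> G)\<^sup>2"

definition kernel_fun :: "'s set \<Rightarrow> ('s \<Rightarrow> 's \<Rightarrow> real) \<Rightarrow> ('s \<Rightarrow> real) \<Rightarrow> 's \<Rightarrow> real" where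
  "kernel_fun S K G x = (\<Sum>y\<in>S. K x y * G y)"

definition kernel_dist :: "'s set \<Rightarrow> ('s \<Rightarrow> real) \<Rightarrow> ('s \<Rightarrow> 's \<Rightarrow> real) \<Rightarrow> 's \<Rightarrow> real" where
  "kernel_dist S \<mu> K y = (\<Sum>x\<in>S. \<mu> x * K x y)"

definition dist_pow :: "'s set \<Rightarrow> ('s \<Rightarrow> 's \<Rightarrow> real) \<Rightarrow> ('s \<Rightarrow> real) \<Rightarrow> nat \<Rightarrow> 's \<Rightarrow> real" where
  "dist_pow S K \<mu> n y = (\<Sum>x\<in>S. \<mu> x * matpow S K n x y)"

definition stochastic_on :: "'s set \<Rightarrow> ('s \<Rightarrow> 's \<Rightarrow> real) \<Rightarrow> bool" where
  "stochastic_on S K \<longleftrightarrow> (\<forall>x\<in>S. \<forall>y\<in>S. 0 \<le> K x y) \<and> (\<forall>x\<in>S. (\<Sum>y\<in>S. K x y) = 1)"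

definition prob_vector :: "'s set \<Rightarrow> ('s \<Rightarrow> real) \<Rightarrow> bool" where
  "prob_vector S \<mu> \<longleftrightarrow> (\<forall>x\<in>S. 0 \<le> \<mu> x) \<and> (\<Sum>x\<in>S. \<mu> x) = 1"

lemma expect_on_cong: "(\<And>x. x \<in> S \<Longrightarrow> \<mu> x = \<nu> x) \<Longrightarrow> expect_on S \<mu> G = expect_on S \<nu> G"
  unfolding expect_on_def by simp

lemma variance_on_cong: "(\<And>x. x \<in> S \<Longrightarrow> \<mu> x = \<nu> x) \<Longrightarrow> variance_on S \<mu> G = variance_on S \<nu> G"
  unfolding variance_on_def using expect_on_cong by metis

lemma expect_kernel_dist:
  "finite S \<Longrightarrow> expect_on S (kernel_dist S \<mu> K) G = expect_on S \<mu> (kernel_fun S K G)"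
  unfolding expect_on_def kernel_dist_def kernel_fun_def
  by (simp add: sum_distrib_left sum_distrib_right mult.assoc) (rule sum.swap)

lemma prob_vector_kernel_dist:
  assumes "finite S" "prob_vector S \<mu>" "stochastic_on S K"
  shows "prob_vector S (kernel_dist S \<mu> K)"
proof -
  have "(\<Sum>y\<in>S. kernel_dist S \<mu> K y) = (\<Sum>x\<in>S. \<mu> x * (\<Sum>y\<in>S. K x y))"
    unfolding kernel_dist_def by (simp add: sum_distrib_left) (rule sum.swap)
  also have "\<dots> = (\<Sum>x\<in>S. \<mu> x)" using assms(3) unfolding stochastic_on_def by simp
  finally show ?thesis using assms(2,3) unfolding prob_vector_def stochastic_on_def kernel_dist_def
    by (auto intro!: sum_nonneg)
qed

lemma expect_le_const:
  assumes "prob_vector S \<mu>" "\<And>x. x \<in> S \<Longrightarrow> H x \<le> b"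
  shows "expect_on S \<mu> H \<le> b"
proof -
  have "expect_on S \<mu> H \<le> (\<Sum>x\<in>S. \<mu> x * b)" unfolding expect_on_def
    using assms unfolding prob_vector_def by (auto intro!: sum_mono mult_left_mono)
  also have "\<dots> = b" using assms unfolding prob_vector_def by (simp add: sum_distrib_right[symmetric])
  finally show ?thesis .
qed

lemma variance_nonneg:
  assumes "prob_vector S \<mu>" shows "0 \<le> variance_on S \<mu> G"
proof -
  define m where "m = expect_on S \<mu> G"
  have total: "(\<Sum>x\<in>S. \<mu> x) = 1" using assms unfolding prob_vector_def by auto
  have "expect_on S \<mu> (\<lambda>x. (G x - m)\<^sup>2)
      = (\<Sum>x\<in>S. \<mu> x * (G x)\<^sup>2 - 2 * m * (\<mu> x * G x) + m\<^sup>2 * \<mu> x)"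
    unfolding expect_on_def by (rule sum.cong) (auto simp: power2_diff algebra_simps)
  also have "\<dots> = expect_on S \<mu> (\<lambda>x. (G x)\<^sup>2) - 2 * m * m + m\<^sup>2 * (\<Sum>x\<in>S. \<mu> x)"
    unfolding expect_on_def m_def by (simp add: sum.distrib sum_subtractf sum_distrib_left)
  also have "\<dots> = variance_on S \<mu> G"
    using total by (simp add: variance_on_def power2_eq_square m_def)
  finally have "variance_on S \<mu> G = expect_on S \<mu> (\<lambda>x. (G x - m)\<^sup>2)" ..
  then show ?thesis unfolding expect_on_def using assms unfolding prob_vector_def
    by (auto intro!: sum_nonneg)
qed

lemma law_of_total_variance:
  assumes "\<And>H. expect_on S \<nu> H = expect_on S \<mu> (J H)"
  shows "variance_on S \<nu> G = variance_on S \<mu> (J G)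
           + expect_on S \<mu> (\<lambda>x. J (\<lambda>y. (G y)\<^sup>2) x - (J G x)\<^sup>2)"
proof -
  have "expect_on S \<mu> (\<lambda>x. J (\<lambda>y. (G y)\<^sup>2) x - (J G x)\<^sup>2)
      = expect_on S \<mu> (J (\<lambda>y. (G y)\<^sup>2)) - expect_on S \<mu> (\<lambda>x. (J G x)\<^sup>2)"
    unfolding expect_on_def by (simp add: right_diff_distrib sum_subtractf)
  then show ?thesis unfolding variance_on_def assms by simp
qed

lemma kernel_cond_variance_le:
  assumes "stochastic_on S K" "x \<in> S"
  shows "kernel_fun S K (\<lambda>y. (G y)\<^sup>2) x - (kernel_fun S K G x)\<^sup>2 \<le> kernel_fun S K (\<lambda>y. (G y - G x)\<^sup>2) x"
proof -
  have total: "(\<Sum>y\<in>S. K x y) = 1" using assms unfolding stochastic_on_def by auto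
  have "kernel_fun S K (\<lambda>y. (G y - G x)\<^sup>2) x
      = (\<Sum>y\<in>S. K x y * (G y)\<^sup>2 - 2 * G x * (K x y * G y) + (G x)\<^sup>2 * K x y)"
    unfolding kernel_fun_def by (rule sum.cong) (auto simp: power2_diff algebra_simps)
  also have "\<dots> = kernel_fun S K (\<lambda>y. (G y)\<^sup>2) x - 2 * G x * kernel_fun S K G x + (G x)\<^sup>2 * (\<Sum>y\<in>S. K x y)"
    unfolding kernel_fun_def by (simp add: sum.distrib sum_subtractf sum_distrib_left)
  also have "\<dots> = kernel_fun S K (\<lambda>y. (G y)\<^sup>2) x - (kernel_fun S K G x)\<^sup>2 + (kernel_fun S K G x - G x)\<^sup>2"
    using total by (simp add: power2_diff)
  finally show ?thesis by simp
qed

lemma dist_pow_0: "finite S \<Longrightarrow> y \<in> S \<Longrightarrow> dist_pow S K \<mu> 0 y = \<mu> y"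
  unfolding dist_pow_def by (simp add: if_distrib cong: if_cong)

lemma dist_pow_Suc: "finite S \<Longrightarrow> dist_pow S K \<mu> (Suc n) = kernel_dist S (dist_pow S K \<mu> n) K"
  unfolding dist_pow_def kernel_dist_def
  by (auto simp: sum_distrib_left sum_distrib_right mult.assoc intro!: ext) (rule sum.swap)

lemma prob_vector_dist_pow:
  assumes "finite S" "prob_vector S \<mu>" "stochastic_on S K"
  shows "prob_vector S (dist_pow S K \<mu> n)"
proof (induction n)
  case 0
  then show ?case using assms(2) dist_pow_0[OF assms(1)] unfolding prob_vector_def by simp
next
  case (Suc n)
  then show ?case using prob_vector_kernel_dist[OF assms(1) _ assms(3)] dist_pow_Suc[OF assms(1)] by simp
qed

lemma variance_dist_pow_le:
  assumes "finite S" "prob_vector S \<mu>" "stochastic_on S K"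
    and "\<forall>j<n. \<forall>x\<in>S. kernel_fun S K (\<lambda>y. ((kernel_fun S K ^^ j) F y - (kernel_fun S K ^^ j) F x)\<^sup>2) x \<le> \<beta>"
  shows "variance_on S (dist_pow S K \<mu> n) F \<le> variance_on S \<mu> ((kernel_fun S K ^^ n) F) + real n * \<beta>"
  using assms(4)
proof (induction n arbitrary: F)
  case 0
  have "variance_on S (dist_pow S K \<mu> 0) F = variance_on S \<mu> F"
    by (rule variance_on_cong) (simp add: dist_pow_0[OF assms(1)])
  then show ?case by simp
next
  case (Suc n)
  let ?KF = "kernel_fun S K F"
  have IH_hyp: "\<forall>j<n. \<forall>x\<in>S. kernel_fun S K (\<lambda>y. ((kernel_fun S K ^^ j) ?KF y - (kernel_fun S K ^^ j) ?KF x)\<^sup>2) x \<le> \<beta>"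
  proof (intro allI impI ballI)
    fix j x assume "j < n" "x \<in> S"
    then show "kernel_fun S K (\<lambda>y. ((kernel_fun S K ^^ j) ?KF y - (kernel_fun S K ^^ j) ?KF x)\<^sup>2) x \<le> \<beta>"
      using Suc.prems[rule_format, of "Suc j" x] by (simp only: funpow_Suc_right comp_def)
  qed
  have \<mu>n: "prob_vector S (dist_pow S K \<mu> n)" by (rule prob_vector_dist_pow[OF assms(1-3)])
  have "variance_on S (dist_pow S K \<mu> (Suc n)) F = variance_on S (dist_pow S K \<mu> n) ?KF
       + expect_on S (dist_pow S K \<mu> n) (\<lambda>x. kernel_fun S K (\<lambda>y. (F y)\<^sup>2) x - (?KF x)\<^sup>2)"
    unfolding dist_pow_Suc[OF assms(1)] by (rule law_of_total_variance[OF expect_kernel_dist[OF assms(1)]])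
  also have "expect_on S (dist_pow S K \<mu> n) (\<lambda>x. kernel_fun S K (\<lambda>y. (F y)\<^sup>2) x - (?KF x)\<^sup>2) \<le> \<beta>"
  proof (rule expect_le_const[OF \<mu>n])
    fix x assume x: "x \<in> S"
    have "kernel_fun S K (\<lambda>y. (F y - F x)\<^sup>2) x \<le> \<beta>" using Suc.prems x by fastforce
    then show "kernel_fun S K (\<lambda>y. (F y)\<^sup>2) x - (?KF x)\<^sup>2 \<le> \<beta>"
      using kernel_cond_variance_le[OF assms(3) x, of F] by linarith
  qed
  also have "variance_on S (dist_pow S K \<mu> n) ?KF \<le> variance_on S \<mu> ((kernel_fun S K ^^ n) ?KF) + real n * \<beta>"
    using Suc.IH[OF IH_hyp] .
  finally show ?case by (simp add: funpow_swap1 algebra_simps)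
qed

section \<open>The exponential of a generator as a limit of Euler steps\<close>

lemma sum_choose_Suc:
  fixes a :: "nat \<Rightarrow> real"
  shows "(\<Sum>k\<le>Suc n. real (Suc n choose k) * a k) = (\<Sum>k\<le>n. real (n choose k) * a k) + (\<Sum>k\<le>n. real (n choose k) * a (Suc k))"
proof -
  have "(\<Sum>k\<le>Suc n. real (Suc n choose k) * a k) = a 0 + (\<Sum>k\<le>n. real (Suc n choose Suc k) * a (Suc k))"
    by (subst sum.atMost_Suc_shift) simp
  also have "\<dots> = a 0 + (\<Sum>k\<le>n. real (n choose Suc k) * a (Suc k)) + (\<Sum>k\<le>n. real (n choose k) * a (Suc k))"
    by (simp add: sum.distrib algebra_simps)
  also have "a 0 + (\<Sum>k\<le>n. real (n choose Suc k) * a (Suc k)) = (\<Sum>k\<le>Suc n. real (n choose k) * a k)"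
    using sum.atMost_Suc_shift[of "\<lambda>k. real (n choose k) * a k" n] by simp
  also have "\<dots> = (\<Sum>k\<le>n. real (n choose k) * a k)" by simp
  finally show ?thesis .
qed

lemma matpow_id_plus:
  fixes Q :: "'s \<Rightarrow> 's \<Rightarrow> real"
  assumes S: "finite S" and y: "y \<in> S"
  shows "matpow S (\<lambda>x y. (if x = y then 1 else 0) + h * Q x y) n x y
       = (\<Sum>k\<le>n. real (n choose k) * (h ^ k * matpow S Q k x y))"
  using y
proof (induction n arbitrary: y)
  case 0
  then show ?case by simp
next
  case (Suc n)
  let ?K = "\<lambda>x y. (if x = y then 1 else 0) + h * Q x y"
  have "matpow S ?K (Suc n) x y = (\<Sum>z\<in>S. matpow S ?K n x z * (if z = y then 1 else 0))
        + h * (\<Sum>z\<in>S. matpow S ?K n x z * Q z y)"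
    by (simp add: distrib_left sum.distrib sum_distrib_left algebra_simps)
  also have "(\<Sum>z\<in>S. matpow S ?K n x z * (if z = y then 1 else 0)) = matpow S ?K n x y"
    using Suc.prems S by (simp add: if_distrib[of "\<lambda>u. _ * u"] cong: if_cong)
  also have "matpow S ?K n x y = (\<Sum>k\<le>n. real (n choose k) * (h ^ k * matpow S Q k x y))"
    using Suc.IH[OF Suc.prems] .
  also have "(\<Sum>z\<in>S. matpow S ?K n x z * Q z y) = (\<Sum>z\<in>S. (\<Sum>k\<le>n. real (n choose k) * (h ^ k * matpow S Q k x z)) * Q z y)"
    by (rule sum.cong) (auto simp: Suc.IH)
  also have "\<dots> = (\<Sum>k\<le>n. real (n choose k) * (h ^ k * matpow S Q (Suc k) x y))"
    by (simp add: sum_distrib_right sum_distrib_left algebra_simps) (rule sum.swap)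
  also have "h * \<dots> = (\<Sum>k\<le>n. real (n choose k) * (h ^ Suc k * matpow S Q (Suc k) x y))"
    by (simp add: sum_distrib_left algebra_simps)
  finally show ?case using sum_choose_Suc[of n "\<lambda>k. h ^ k * matpow S Q k x y"] by simp
qed

lemma abs_matpow_le:
  fixes Q :: "'s \<Rightarrow> 's \<Rightarrow> real"
  assumes S: "finite S" and y: "y \<in> S"
  shows "\<bar>matpow S Q k x y\<bar> \<le> (\<Sum>z\<in>S. \<Sum>w\<in>S. \<bar>Q z w\<bar>) ^ k"
  using y
proof (induction k arbitrary: y)
  case 0 then show ?case by simp
next
  case (Suc k)
  let ?B = "\<Sum>z\<in>S. \<Sum>w\<in>S. \<bar>Q z w\<bar>"
  have "\<bar>matpow S Q (Suc k) x y\<bar> \<le> (\<Sum>z\<in>S. \<bar>matpow S Q k x z\<bar> * \<bar>Q z y\<bar>)"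
    by (simp add: abs_mult[symmetric] sum_abs)
  also have "\<dots> \<le> (\<Sum>z\<in>S. ?B ^ k * \<bar>Q z y\<bar>)"
    by (intro sum_mono mult_right_mono Suc.IH) auto
  also have "\<dots> = ?B ^ k * (\<Sum>z\<in>S. \<bar>Q z y\<bar>)" by (simp add: sum_distrib_left)
  also have "(\<Sum>z\<in>S. \<bar>Q z y\<bar>) \<le> ?B"
    by (intro sum_mono member_le_sum) (use S Suc.prems in auto)
  then have "?B ^ k * (\<Sum>z\<in>S. \<bar>Q z y\<bar>) \<le> ?B ^ k * ?B"
    by (intro mult_left_mono) (auto intro!: zero_le_power sum_nonneg)
  finally show ?case by (simp add: algebra_simps)
qed

lemma choose_mult_power_tendsto:
  "(\<lambda>n. real (n choose k) * (t / real n) ^ k) \<longlonglongrightarrow> t ^ k / fact k"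
proof -
  have ev: "\<forall>\<^sub>F n in sequentially. real (n choose k) * (t / real n) ^ k
         = t ^ k / fact k * (\<Prod>i=0..<k. 1 - real i / real n)"
  proof (rule eventually_sequentiallyI[of 1])
    fix n :: nat assume n: "1 \<le> n"
    have A: "real (n choose k) = (\<Prod>i=0..<k. real n - real i) / fact k"
      by (simp add: binomial_gbinomial gbinomial_prod_rev)
    moreover have B: "(\<Prod>i=0..<k. real n - real i) * (t / real n) ^ k = t ^ k * (\<Prod>i=0..<k. 1 - real i / real n)"
    proof -
      have "(\<Prod>i=0..<k. 1 - real i / real n) = (\<Prod>i=0..<k. (real n - real i) / real n)"
        using n by (intro prod.cong) (auto simp: field_simps)
      also have "\<dots> = (\<Prod>i=0..<k. real n - real i) / real n ^ k" by (simp add: prod_dividef)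
      finally show ?thesis by (simp add: power_divide)
    qed
    have "real (n choose k) * (t / real n) ^ k = ((\<Prod>i=0..<k. real n - real i) * (t / real n) ^ k) / fact k"
      unfolding A by simp
    then show "real (n choose k) * (t / real n) ^ k = t ^ k / fact k * (\<Prod>i=0..<k. 1 - real i / real n)"
      unfolding B by simp
  qed
  have "(\<lambda>n. t ^ k / fact k * (\<Prod>i=0..<k. 1 - real i / real n)) \<longlonglongrightarrow> t ^ k / fact k * (\<Prod>i=0..<k. 1 - 0)"
    by (intro tendsto_intros)
  then show ?thesis using Lim_transform_eventually[OF _ ev[THEN eventually_mono, OF sym]] by simp
qed

lemma choose_mult_power_abs_le:
  "real (n choose k) * \<bar>t / real n\<bar> ^ k \<le> \<bar>t\<bar> ^ k / fact k"
proof (cases "n = 0")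
  case True then show ?thesis by (cases k) auto
next
  case False
  have "real (n choose k) * fact k \<le> real n ^ k"
    using binomial_fact_pow[of n k] by (metis of_nat_fact of_nat_le_iff of_nat_mult of_nat_power)
  then have "real (n choose k) \<le> real n ^ k / fact k" by (simp add: field_simps)
  then have "real (n choose k) * \<bar>t / real n\<bar> ^ k \<le> real n ^ k / fact k * \<bar>t / real n\<bar> ^ k"
    by (intro mult_right_mono) auto
  also have "\<dots> = \<bar>t\<bar> ^ k / fact k" using False by (simp add: power_divide field_simps)
  finally show ?thesis .
qed

lemma matpow_euler_tendsto:
  fixes Q :: "'s \<Rightarrow> 's \<Rightarrow> real"
  assumes S: "finite S" and y: "y \<in> S"
  shows "(\<lambda>n. matpow S (\<lambda>x y. (if x = y then 1 else 0) + (t / real n) * Q x y) n x y)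
          \<longlonglongrightarrow> (\<Sum>k. t ^ k / fact k * matpow S Q k x y)"
proof -
  define B where "B = (\<Sum>z\<in>S. \<Sum>w\<in>S. \<bar>Q z w\<bar>)"
  define a where "a k n = real (n choose k) * ((t / real n) ^ k * matpow S Q k x y)" for k n
  define M where "M k = inverse (fact k) * (\<bar>t\<bar> * B) ^ k" for k
  have eq: "matpow S (\<lambda>x y. (if x = y then 1 else 0) + (t / real n) * Q x y) n x y = (\<Sum>k. a k n)" for n
  proof -
    have "(\<Sum>k. a k n) = (\<Sum>k\<le>n. a k n)" by (rule suminf_finite) (auto simp: a_def)
    then show ?thesis unfolding a_def matpow_id_plus[OF S y] by simp
  qed
  have lim: "(\<lambda>n. a k n) \<longlonglongrightarrow> t ^ k / fact k * matpow S Q k x y" for k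
    unfolding a_def mult.assoc[symmetric] by (intro tendsto_mult choose_mult_power_tendsto tendsto_const)
  have bound: "norm (a k n) \<le> M k" for k n
  proof -
    have "norm (a k n) = real (n choose k) * \<bar>t / real n\<bar> ^ k * \<bar>matpow S Q k x y\<bar>"
      by (simp add: a_def abs_mult power_abs)
    also have "\<dots> \<le> \<bar>t\<bar> ^ k / fact k * B ^ k"
      unfolding B_def by (intro mult_mono choose_mult_power_abs_le abs_matpow_le[OF S y]) auto
    also have "\<dots> = M k" unfolding M_def by (simp add: power_mult_distrib field_simps)
    finally show ?thesis .
  qed
  have "summable M" unfolding M_def by (rule summable_exp)
  \<comment> \<open>Tannery's theorem, dominated by the series of \<open>exp (\<bar>t\<bar> * B)\<close>\<close>
  then have "(\<lambda>n. \<Sum>k. a k n) \<longlonglongrightarrow> (\<Sum>k. t ^ k / fact k * matpow S Q k x y)"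
    using tannerys_theorem[OF lim _ \<open>summable M\<close>] bound by (simp add: always_eventually)
  then show ?thesis unfolding eq .
qed

section \<open>The SIR generator\<close>

lemma finite_sir_states: "finite (sir_states N)"
proof -
  let ?E = "(\<lambda>g i. if i \<in> {1..N} then g i else (0::int)) ` (PiE {1..N} (\<lambda>_. {-1,0,1::int}))"
  have "sir_states N \<subseteq> ?E"
  proof
    fix x assume x: "x \<in> sir_states N"
    let ?g = "restrict x {1..N}"
    have "?g \<in> PiE {1..N} (\<lambda>_. {-1,0,1})" using x unfolding sir_states_def by auto
    moreover have "x = (\<lambda>i. if i \<in> {1..N} then ?g i else 0)"
      using x unfolding sir_states_def by (auto intro!: ext)
    ultimately show "x \<in> ?E" by blast
  qed
  moreover have "finite ?E" by (intro finite_imageI finite_PiE) auto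
  ultimately show ?thesis by (rule finite_subset)
qed

lemma zero_in_sir_states: "(\<lambda>_. 0) \<in> sir_states N"
  unfolding sir_states_def by auto

lemma fun_upd_in_sir_states:
  "x \<in> sir_states N \<Longrightarrow> i \<in> {1..N} \<Longrightarrow> u \<in> {-1,0,1} \<Longrightarrow> x(i:=u) \<in> sir_states N"
  unfolding sir_states_def by auto

lemma sir_states_fun_upd_site:
  assumes "x \<in> sir_states N" "x(k:=v) \<in> sir_states N" "x(k:=v) \<noteq> x"
  shows "k \<in> {1..N}" "v \<in> {-1,0,1}"
proof -
  show k: "k \<in> {1..N}"
  proof (rule ccontr)
    assume "k \<notin> {1..N}"
    then have "x k = 0" "v = 0" using assms(1,2) unfolding sir_states_def
      by (auto dest!: spec[of _ k])
    then show False using assms(3) by (metis fun_upd_triv)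
  qed
  show "v \<in> {-1,0,1}" using assms(2) k unfolding sir_states_def by (auto dest!: bspec[of _ _ k])
qed

lemma grid_point_in_unit: "i \<in> {1..N} \<Longrightarrow> real i / real N \<in> {0..1}"
  by auto

definition recovery_rate :: "(real \<Rightarrow> real) \<Rightarrow> nat \<Rightarrow> (nat \<Rightarrow> int) \<Rightarrow> nat \<Rightarrow> real" where
  "recovery_rate psi N x i = (if x i = 1 then psi (real i / real N) else 0)"

definition infection_rate :: "(real \<Rightarrow> real \<Rightarrow> real) \<Rightarrow> nat \<Rightarrow> (nat \<Rightarrow> int) \<Rightarrow> nat \<Rightarrow> real" where
  "infection_rate lam N x i = (if x i = 0
     then (1 / real N) * (\<Sum>j\<in>{1..N}. lam (real i / real N) (real j / real N) * (if x j = 1 then 1 else 0))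
     else 0)"

definition jump_term ::
  "(real \<Rightarrow> real \<Rightarrow> real) \<Rightarrow> (real \<Rightarrow> real) \<Rightarrow> nat \<Rightarrow> ((nat \<Rightarrow> int) \<Rightarrow> real) \<Rightarrow> (nat \<Rightarrow> int) \<Rightarrow> nat \<Rightarrow> real" where
  "jump_term lam psi N G x i = recovery_rate psi N x i * (G (x(i:=-1)) - G x)
     + infection_rate lam N x i * (G (x(i:=1)) - G x)"

definition euler_kernel ::
  "(real \<Rightarrow> real \<Rightarrow> real) \<Rightarrow> (real \<Rightarrow> real) \<Rightarrow> nat \<Rightarrow> real \<Rightarrow> (nat \<Rightarrow> int) \<Rightarrow> (nat \<Rightarrow> int) \<Rightarrow> real" where
  "euler_kernel lam psi N h x y = (if x = y then 1 else 0) + h * sir_gen lam psi N x y"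

lemma sum_if_eq_mult:
  fixes w :: real and H :: "'a \<Rightarrow> real"
  assumes "finite A" "P \<Longrightarrow> c \<in> A"
  shows "(\<Sum>y\<in>A. (if P \<and> y = c then w else 0) * H y) = (if P then w * H c else 0)"
proof (cases P)
  case True
  have "(\<Sum>y\<in>A. (if P \<and> y = c then w else 0) * H y) = (\<Sum>y\<in>A. if y = c then w * H y else 0)"
    using True by (intro sum.cong) auto
  also have "\<dots> = w * H c" using True assms by (simp add: sum.delta')
  finally show ?thesis using True by simp
qed simp

lemma sum_sir_rate:
  assumes x: "x \<in> sir_states N"
  shows "(\<Sum>y\<in>sir_states N - {x}. sir_rate lam psi N x y * H y)
       = (\<Sum>i\<in>{1..N}. recovery_rate psi N x i * H (x(i:=-1)) + infection_rate lam N x i * H (x(i:=1)))"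
proof -
  let ?A = "sir_states N - {x}"
  let ?\<beta> = "\<lambda>i. (1 / real N) * (\<Sum>j\<in>{1..N}. lam (real i / real N) (real j / real N) * (if x j = 1 then 1 else 0))"
  have fin: "finite ?A" using finite_sir_states by simp
  have "(\<Sum>y\<in>?A. sir_rate lam psi N x y * H y)
     = (\<Sum>i\<in>{1..N}. \<Sum>y\<in>?A. (if x i = 1 \<and> y = x(i := -1) then psi (real i / real N) else 0) * H y
                          + (if x i = 0 \<and> y = x(i := 1) then ?\<beta> i else 0) * H y)"
    unfolding sir_rate_def by (simp add: sum_distrib_right distrib_right) (rule sum.swap)
  also have "\<dots> = (\<Sum>i\<in>{1..N}. recovery_rate psi N x i * H (x(i:=-1)) + infection_rate lam N x i * H (x(i:=1)))"
  proof (rule sum.cong[OF refl])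
    fix i assume i: "i \<in> {1..N}"
    have "x i = 1 \<Longrightarrow> x(i:=-1) \<in> ?A" "x i = 0 \<Longrightarrow> x(i:=1) \<in> ?A"
      using fun_upd_in_sir_states[OF x i] by (auto dest: fun_cong[of _ _ i])
    then show "(\<Sum>y\<in>?A. (if x i = 1 \<and> y = x(i := -1) then psi (real i / real N) else 0) * H y
                          + (if x i = 0 \<and> y = x(i := 1) then ?\<beta> i else 0) * H y)
        = recovery_rate psi N x i * H (x(i:=-1)) + infection_rate lam N x i * H (x(i:=1))"
      unfolding sum.distrib recovery_rate_def infection_rate_def
      by (simp add: sum_if_eq_mult[OF fin])
  qed
  finally show ?thesis .
qed

lemma sir_gen_apply:
  assumes x: "x \<in> sir_states N"
  shows "(\<Sum>y\<in>sir_states N. sir_gen lam psi N x y * G y) = (\<Sum>i\<in>{1..N}. jump_term lam psi N G x i)"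
proof -
  let ?S = "sir_states N"
  have "(\<Sum>y\<in>?S. sir_gen lam psi N x y * G y)
      = sir_gen lam psi N x x * G x + (\<Sum>y\<in>?S - {x}. sir_gen lam psi N x y * G y)"
    using x finite_sir_states by (simp add: sum.remove)
  also have "(\<Sum>y\<in>?S - {x}. sir_gen lam psi N x y * G y) = (\<Sum>y\<in>?S - {x}. sir_rate lam psi N x y * G y)"
    by (rule sum.cong) (auto simp: sir_gen_def)
  also have "sir_gen lam psi N x x * G x + (\<Sum>y\<in>?S - {x}. sir_rate lam psi N x y * G y)
      = (\<Sum>y\<in>?S - {x}. sir_rate lam psi N x y * (G y - G x))"
    by (simp add: sir_gen_def right_diff_distrib sum_subtractf sum_distrib_right)
  also have "\<dots> = (\<Sum>i\<in>{1..N}. jump_term lam psi N G x i)"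
    unfolding sum_sir_rate[OF x] jump_term_def ..
  finally show ?thesis .
qed

lemma kernel_fun_euler_kernel:
  assumes x: "x \<in> sir_states N"
  shows "kernel_fun (sir_states N) (euler_kernel lam psi N h) G x
     = G x + h * (\<Sum>i\<in>{1..N}. jump_term lam psi N G x i)"
proof -
  have "(\<Sum>y\<in>sir_states N. (if x = y then 1 else 0) * G y) = (\<Sum>y\<in>sir_states N. if x = y then G y else 0)"
    by (rule sum.cong) auto
  also have "\<dots> = G x" using x finite_sir_states by simp
  finally have "(\<Sum>y\<in>sir_states N. (if x = y then 1 else 0) * G y) = G x" .
  then show ?thesis
    unfolding kernel_fun_def euler_kernel_def sir_gen_apply[OF x, symmetric]
    by (simp add: distrib_right sum.distrib sum_distrib_left mult.assoc)
qed

section \<open>Bounded differences under the Euler kernel\<close>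

definition bounded_differences :: "('i \<Rightarrow> 'v) set \<Rightarrow> (('i \<Rightarrow> 'v) \<Rightarrow> real) \<Rightarrow> real \<Rightarrow> bool" where
  "bounded_differences S G c \<longleftrightarrow> (\<forall>x\<in>S. \<forall>k v. x(k:=v) \<in> S \<longrightarrow> \<bar>G x - G (x(k:=v))\<bar> \<le> c)"

lemma bounded_differencesD:
  "bounded_differences S G c \<Longrightarrow> x \<in> S \<Longrightarrow> x(k:=v) \<in> S \<Longrightarrow> \<bar>G x - G (x(k:=v))\<bar> \<le> c"
  unfolding bounded_differences_def by blast

lemma bounded_differences_mono: "bounded_differences S G c \<Longrightarrow> c \<le> d \<Longrightarrow> bounded_differences S G d"
  unfolding bounded_differences_def by force

lemma square_le_of_abs_le: "\<bar>d\<bar> \<le> (c::real) \<Longrightarrow> d\<^sup>2 \<le> c\<^sup>2"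
  by (metis abs_le_square_iff abs_of_nonneg abs_ge_zero order_trans)

locale sir_bounded_rates =
  fixes lam :: "real \<Rightarrow> real \<Rightarrow> real" and psi :: "real \<Rightarrow> real" and Ps La :: real
  assumes psi_bounds: "\<forall>x\<in>{0..1}. 0 \<le> psi x \<and> psi x \<le> Ps"
      and lam_bounds: "\<forall>x\<in>{0..1}. \<forall>y\<in>{0..1}. 0 \<le> lam x y \<and> lam x y \<le> La"
begin

lemma Ps_nonneg: "0 \<le> Ps" using psi_bounds by force

lemma La_nonneg: "0 \<le> La" using lam_bounds by force

lemma recovery_rate_bounds:
  "i \<in> {1..N} \<Longrightarrow> 0 \<le> recovery_rate psi N x i \<and> recovery_rate psi N x i \<le> Ps"
  using psi_bounds grid_point_in_unit[of i N] Ps_nonneg unfolding recovery_rate_def by auto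

lemma infection_sum_bounds:
  assumes i: "i \<in> {1..N}"
  shows "0 \<le> (\<Sum>j\<in>{1..N}. lam (real i / real N) (real j / real N) * (if x j = 1 then 1 else 0))
     \<and> (\<Sum>j\<in>{1..N}. lam (real i / real N) (real j / real N) * (if x j = 1 then 1 else 0)) \<le> real N * La"
proof -
  have "(\<Sum>j\<in>{1..N}. lam (real i / real N) (real j / real N) * (if x j = 1 then 1 else 0)) \<le> (\<Sum>j\<in>{1..N}. La)"
    using lam_bounds grid_point_in_unit[OF i] grid_point_in_unit La_nonneg by (intro sum_mono) auto
  moreover have "0 \<le> (\<Sum>j\<in>{1..N}. lam (real i / real N) (real j / real N) * (if x j = 1 then 1 else 0))"
    using lam_bounds grid_point_in_unit[OF i] grid_point_in_unit by (intro sum_nonneg) auto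
  ultimately show ?thesis by simp
qed

lemma infection_rate_bounds:
  assumes i: "i \<in> {1..N}"
  shows "0 \<le> infection_rate lam N x i \<and> infection_rate lam N x i \<le> La"
proof -
  have N: "real N > 0" using i by auto
  note bounds = infection_sum_bounds[OF i, of x]
  have "(1 / real N) * (\<Sum>j\<in>{1..N}. lam (real i / real N) (real j / real N) * (if x j = 1 then 1 else 0)) \<le> La"
    using bounds N by (simp add: field_simps)
  then show ?thesis using bounds N La_nonneg unfolding infection_rate_def by auto
qed

lemma infection_rate_fun_upd:
  assumes i: "i \<in> {1..N}" and ki: "k \<noteq> i"
  shows "\<bar>infection_rate lam N x i - infection_rate lam N (x(k:=v)) i\<bar> \<le> La / real N"
proof (cases "x i = 0")
  case False
  then show ?thesis using ki La_nonneg unfolding infection_rate_def by auto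
next
  case True
  let ?l = "\<lambda>j. lam (real i / real N) (real j / real N)"
  let ?d = "\<lambda>j. ?l j * (if x j = 1 then 1 else 0) - ?l j * (if (x(k:=v)) j = 1 then 1 else 0)"
  have N: "real N > 0" using i by auto
  have "\<bar>\<Sum>j\<in>{1..N}. ?d j\<bar> \<le> La"
  proof (cases "k \<in> {1..N}")
    case False
    then have "(\<Sum>j\<in>{1..N}. ?d j) = 0" by (intro sum.neutral) auto
    then show ?thesis using La_nonneg by simp
  next
    case True
    have "(\<Sum>j\<in>{1..N}. ?d j) = ?d k + (\<Sum>j\<in>{1..N} - {k}. ?d j)"
      using True by (simp add: sum.remove)
    also have "(\<Sum>j\<in>{1..N} - {k}. ?d j) = 0" by (intro sum.neutral) auto
    finally have e: "(\<Sum>j\<in>{1..N}. ?d j) = ?d k" by simp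
    have "0 \<le> ?l k" "?l k \<le> La" using lam_bounds grid_point_in_unit[OF i] grid_point_in_unit[OF True] by auto
    then show ?thesis unfolding e by auto
  qed
  then have "(1 / real N) * \<bar>\<Sum>j\<in>{1..N}. ?d j\<bar> \<le> La / real N"
    using N by (simp add: field_simps)
  moreover have "infection_rate lam N x i - infection_rate lam N (x(k:=v)) i = (1 / real N) * (\<Sum>j\<in>{1..N}. ?d j)"
    unfolding infection_rate_def using True ki by (simp add: sum_subtractf right_diff_distrib)
  ultimately show ?thesis by (simp add: abs_mult)
qed

lemma sir_rate_nonneg: "0 \<le> sir_rate lam psi N x y"
  unfolding sir_rate_def
proof (intro sum_nonneg add_nonneg_nonneg)
  fix i assume i: "i \<in> {1..N}"
  show "0 \<le> (if x i = 1 \<and> y = x(i := - 1) then psi (real i / real N) else 0)"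
    using psi_bounds grid_point_in_unit[OF i] by auto
  show "0 \<le> (if x i = 0 \<and> y = x(i := 1)
      then 1 / real N * (\<Sum>j = 1..N. lam (real i / real N) (real j / real N) * (if x j = 1 then 1 else 0))
      else 0)"
    using infection_sum_bounds[OF i, of x] by auto
qed

lemma total_rate_le:
  assumes "I \<subseteq> {1..N}"
  shows "(\<Sum>i\<in>I. recovery_rate psi N x i + infection_rate lam N x i) \<le> real (card I) * (Ps + La)"
proof -
  have "(\<Sum>i\<in>I. recovery_rate psi N x i + infection_rate lam N x i) \<le> (\<Sum>i\<in>I. Ps + La)"
    using assms recovery_rate_bounds infection_rate_bounds by (intro sum_mono add_mono) auto
  then show ?thesis by simp
qed

lemma step_total_rate_le_one:
  assumes I: "I \<subseteq> {1..N}" and h: "0 \<le> h" "h * real N * (Ps + La) \<le> 1"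
  shows "h * (\<Sum>i\<in>I. recovery_rate psi N x i + infection_rate lam N x i) \<le> 1"
proof -
  have "(\<Sum>i\<in>I. recovery_rate psi N x i + infection_rate lam N x i) \<le> real (card I) * (Ps + La)"
    by (rule total_rate_le[OF I])
  also have "\<dots> \<le> real N * (Ps + La)"
    using card_mono[OF finite_atLeastAtMost I] Ps_nonneg La_nonneg by (intro mult_right_mono) auto
  finally have "h * (\<Sum>i\<in>I. recovery_rate psi N x i + infection_rate lam N x i) \<le> h * (real N * (Ps + La))"
    using h(1) by (rule mult_left_mono)
  then show ?thesis using h(2) by (simp add: mult.assoc)
qed

lemma stochastic_euler_kernel:
  assumes h: "0 \<le> h" "h * real N * (Ps + La) \<le> 1"
  shows "stochastic_on (sir_states N) (euler_kernel lam psi N h)"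
  unfolding stochastic_on_def
proof (intro conjI ballI)
  fix x y assume x: "x \<in> sir_states N" and y: "y \<in> sir_states N"
  show "0 \<le> euler_kernel lam psi N h x y"
  proof (cases "x = y")
    case False
    then show ?thesis unfolding euler_kernel_def sir_gen_def using sir_rate_nonneg h by simp
  next
    case True
    have "(\<Sum>y\<in>sir_states N - {x}. sir_rate lam psi N x y)
        = (\<Sum>i\<in>{1..N}. recovery_rate psi N x i + infection_rate lam N x i)"
      using sum_sir_rate[OF x, of lam psi "\<lambda>_. 1::real"] by simp
    then have "h * (\<Sum>y\<in>sir_states N - {x}. sir_rate lam psi N x y) \<le> 1"
      using step_total_rate_le_one[OF order_refl h] by simp
    then show ?thesis unfolding euler_kernel_def sir_gen_def using True by simp
  qed
next
  fix x assume x: "x \<in> sir_states N"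
  have "(\<Sum>y\<in>sir_states N. euler_kernel lam psi N h x y)
      = kernel_fun (sir_states N) (euler_kernel lam psi N h) (\<lambda>_. 1) x"
    unfolding kernel_fun_def by simp
  also have "\<dots> = 1" by (simp add: kernel_fun_euler_kernel[OF x] jump_term_def)
  finally show "(\<Sum>y\<in>sir_states N. euler_kernel lam psi N h x y) = 1" .
qed

lemma euler_cond_variance_le:
  assumes x: "x \<in> sir_states N" and L: "bounded_differences (sir_states N) G c" and h: "0 \<le> h"
  shows "kernel_fun (sir_states N) (euler_kernel lam psi N h) (\<lambda>y. (G y - G x)\<^sup>2) x
           \<le> h * real N * (Ps + La) * c\<^sup>2"
proof -
  have "(\<Sum>i\<in>{1..N}. jump_term lam psi N (\<lambda>y. (G y - G x)\<^sup>2) x i)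
      \<le> (\<Sum>i\<in>{1..N}. (recovery_rate psi N x i + infection_rate lam N x i) * c\<^sup>2)"
  proof (rule sum_mono)
    fix i assume i: "i \<in> {1..N}"
    have "\<bar>G x - G (x(i:=-1))\<bar> \<le> c" "\<bar>G x - G (x(i:=1))\<bar> \<le> c"
      using bounded_differencesD[OF L x fun_upd_in_sir_states[OF x i]] by auto
    then have "(G (x(i:=-1)) - G x)\<^sup>2 \<le> c\<^sup>2" "(G (x(i:=1)) - G x)\<^sup>2 \<le> c\<^sup>2"
      by (auto intro!: square_le_of_abs_le simp: abs_minus_commute)
    then show "jump_term lam psi N (\<lambda>y. (G y - G x)\<^sup>2) x i \<le> (recovery_rate psi N x i + infection_rate lam N x i) * c\<^sup>2"
      using recovery_rate_bounds[OF i, of x] infection_rate_bounds[OF i, of x]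
      by (simp add: jump_term_def distrib_right add_mono mult_left_mono)
  qed
  also have "\<dots> = (\<Sum>i\<in>{1..N}. recovery_rate psi N x i + infection_rate lam N x i) * c\<^sup>2"
    by (simp add: sum_distrib_right)
  also have "\<dots> \<le> real N * (Ps + La) * c\<^sup>2"
    using total_rate_le[of "{1..N}" N x] by (simp add: mult_right_mono)
  finally show ?thesis unfolding kernel_fun_euler_kernel[OF x] using h
    by (simp add: mult_left_mono mult.assoc)
qed

lemma jump_term_bound:
  assumes L: "bounded_differences (sir_states N) G c" and z: "z \<in> sir_states N" and k: "k \<in> {1..N}"
  shows "\<bar>jump_term lam psi N G z k\<bar> \<le> (Ps + La) * c"
proof -
  have d1: "\<bar>G (z(k:=-1)) - G z\<bar> \<le> c" and d2: "\<bar>G (z(k:=1)) - G z\<bar> \<le> c"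
    using bounded_differencesD[OF L z fun_upd_in_sir_states[OF z k]] by (auto simp: abs_minus_commute)
  have a: "0 \<le> recovery_rate psi N z k" "recovery_rate psi N z k \<le> Ps"
    and b: "0 \<le> infection_rate lam N z k" "infection_rate lam N z k \<le> La"
    using recovery_rate_bounds[OF k] infection_rate_bounds[OF k] by auto
  have "\<bar>recovery_rate psi N z k * (G (z(k:=-1)) - G z)\<bar> \<le> Ps * c"
    unfolding abs_mult using a d1 by (simp add: mult_mono)
  moreover have "\<bar>infection_rate lam N z k * (G (z(k:=1)) - G z)\<bar> \<le> La * c"
    unfolding abs_mult using b d2 by (simp add: mult_mono)
  ultimately show ?thesis unfolding jump_term_def by (simp add: distrib_right)
qed

text \<open>Moving urn \<open>k\<close> changes the rates of another urn \<open>i\<close> by at most \<open>La/N\<close>; the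
  remaining term \<open>(G x - G y) * rate\<close> is absorbed by the weight \<open>1 - h * rate\<close> of staying put.\<close>

lemma jump_term_fun_upd:
  assumes L: "bounded_differences (sir_states N) G c" and x: "x \<in> sir_states N"
    and k: "k \<in> {1..N}" and v: "v \<in> {-1,0,1}" and i: "i \<in> {1..N}" and ik: "i \<noteq> k"
  shows "\<bar>jump_term lam psi N G x i - jump_term lam psi N G (x(k:=v)) i
           + (G x - G (x(k:=v))) * (recovery_rate psi N x i + infection_rate lam N x i)\<bar>
         \<le> (recovery_rate psi N x i + infection_rate lam N x i) * c + La / real N * c"
proof -
  define y where "y = x(k:=v)"
  have y: "y \<in> sir_states N" unfolding y_def by (rule fun_upd_in_sir_states[OF x k v])
  let ?a = "recovery_rate psi N x i" and ?b = "infection_rate lam N x i"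
  have "recovery_rate psi N y i = ?a" using ik unfolding y_def recovery_rate_def by simp
  then have split: "jump_term lam psi N G x i - jump_term lam psi N G y i + (G x - G y) * (?a + ?b)
      = ?a * (G (x(i:=-1)) - G (y(i:=-1))) + ?b * (G (x(i:=1)) - G (y(i:=1)))
        + (?b - infection_rate lam N y i) * (G (y(i:=1)) - G y)"
    unfolding jump_term_def by (simp add: algebra_simps)
  have neighbours: "\<bar>G (x(i:=u)) - G (y(i:=u))\<bar> \<le> c" if u: "u \<in> {-1,0,1}" for u
  proof -
    have "y(i:=u) = (x(i:=u))(k:=v)" using ik unfolding y_def by (simp add: fun_upd_twist)
    then show ?thesis
      using bounded_differencesD[OF L fun_upd_in_sir_states[OF x i u]
          fun_upd_in_sir_states[OF fun_upd_in_sir_states[OF x i u] k v]] by simp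
  qed
  have t1: "\<bar>?a * (G (x(i:=-1)) - G (y(i:=-1)))\<bar> \<le> ?a * c"
    using neighbours[of "-1"] recovery_rate_bounds[OF i] by (simp add: abs_mult mult_left_mono)
  have t2: "\<bar>?b * (G (x(i:=1)) - G (y(i:=1)))\<bar> \<le> ?b * c"
    using neighbours[of 1] infection_rate_bounds[OF i] by (simp add: abs_mult mult_left_mono)
  have "\<bar>G (y(i:=1)) - G y\<bar> \<le> c"
    using bounded_differencesD[OF L y fun_upd_in_sir_states[OF y i, of 1]] by (simp add: abs_minus_commute)
  moreover have "\<bar>?b - infection_rate lam N y i\<bar> \<le> La / real N"
    unfolding y_def using infection_rate_fun_upd[OF i] ik by simp
  ultimately have t3: "\<bar>(?b - infection_rate lam N y i) * (G (y(i:=1)) - G y)\<bar> \<le> La / real N * c"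
    unfolding abs_mult using La_nonneg by (intro mult_mono) auto
  have "\<bar>jump_term lam psi N G x i - jump_term lam psi N G y i + (G x - G y) * (?a + ?b)\<bar>
      \<le> ?a * c + ?b * c + La / real N * c"
    unfolding split using t1 t2 t3 by linarith
  then show ?thesis unfolding y_def by (simp add: distrib_right)
qed

lemma sum_jump_term_fun_upd:
  assumes L: "bounded_differences (sir_states N) G c" and c: "0 \<le> c" and x: "x \<in> sir_states N"
    and k: "k \<in> {1..N}" and v: "v \<in> {-1,0,1}"
  shows "\<bar>\<Sum>i\<in>{1..N} - {k}. jump_term lam psi N G x i - jump_term lam psi N G (x(k:=v)) i
            + (G x - G (x(k:=v))) * (recovery_rate psi N x i + infection_rate lam N x i)\<bar>
         \<le> (\<Sum>i\<in>{1..N} - {k}. recovery_rate psi N x i + infection_rate lam N x i) * c + La * c"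
    (is "\<bar>\<Sum>i\<in>?I. ?d i\<bar> \<le> (\<Sum>i\<in>?I. ?r i) * c + La * c")
proof -
  have "\<bar>\<Sum>i\<in>?I. ?d i\<bar> \<le> (\<Sum>i\<in>?I. \<bar>?d i\<bar>)" by (rule sum_abs)
  also have "\<dots> \<le> (\<Sum>i\<in>?I. ?r i * c + La / real N * c)"
    by (intro sum_mono jump_term_fun_upd[OF L x k v]) auto
  also have "\<dots> = (\<Sum>i\<in>?I. ?r i) * c + real (card ?I) * (La / real N) * c"
    by (simp add: sum.distrib mult.assoc flip: sum_distrib_right)
  also have "\<dots> \<le> (\<Sum>i\<in>?I. ?r i) * c + La * c"
    using card_Diff1_le[of "{1..N}" k] k La_nonneg c by (simp add: field_simps mult_left_mono)
  finally show ?thesis .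
qed

lemma bounded_differences_euler:
  assumes L: "bounded_differences (sir_states N) G c" and c: "0 \<le> c"
    and h: "0 \<le> h" "h * real N * (Ps + La) \<le> 1"
  shows "bounded_differences (sir_states N) (kernel_fun (sir_states N) (euler_kernel lam psi N h) G)
           ((1 + h * (2 * Ps + 3 * La)) * c)"
  unfolding bounded_differences_def
proof (intro ballI allI impI)
  let ?K = "kernel_fun (sir_states N) (euler_kernel lam psi N h) G"
  let ?T = "jump_term lam psi N G"
  fix x k v assume x: "x \<in> sir_states N" and y: "x(k:=v) \<in> sir_states N"
  let ?r = "\<lambda>i. recovery_rate psi N x i + infection_rate lam N x i"
  show "\<bar>?K x - ?K (x(k:=v))\<bar> \<le> (1 + h * (2 * Ps + 3 * La)) * c"
  proof (cases "x(k:=v) = x")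
    case True
    then show ?thesis using c h Ps_nonneg La_nonneg by simp
  next
    case False
    then have k: "k \<in> {1..N}" and v: "v \<in> {-1,0,1}" using sir_states_fun_upd_site[OF x y] by auto
    define I where "I = {1..N} - {k}"
    define D where "D = G x - G (x(k:=v))"
    define A where "A = (\<Sum>i\<in>I. ?r i)"
    define R where "R = (\<Sum>i\<in>I. ?T x i - ?T (x(k:=v)) i + D * ?r i)"
    have I: "I \<subseteq> {1..N}" unfolding I_def by auto
    have split: "(\<Sum>i\<in>{1..N}. ?T z i) = ?T z k + (\<Sum>i\<in>I. ?T z i)" for z
      unfolding I_def using k by (simp add: sum.remove)
    have "R = (\<Sum>i\<in>I. ?T x i) - (\<Sum>i\<in>I. ?T (x(k:=v)) i) + D * A"
      unfolding R_def A_def by (simp add: sum.distrib sum_subtractf flip: sum_distrib_left)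
    then have sums: "(\<Sum>i\<in>I. ?T x i) - (\<Sum>i\<in>I. ?T (x(k:=v)) i) = R - D * A" by simp
    have K: "?K x - ?K (x(k:=v))
        = D + h * ((\<Sum>i\<in>I. ?T x i) - (\<Sum>i\<in>I. ?T (x(k:=v)) i)) + h * (?T x k - ?T (x(k:=v)) k)"
      using kernel_fun_euler_kernel[OF x] kernel_fun_euler_kernel[OF y] split
      by (simp add: D_def algebra_simps)
    have diff: "?K x - ?K (x(k:=v)) = D * (1 - h * A) + h * R + h * (?T x k - ?T (x(k:=v)) k)"
      unfolding K sums by (simp add: algebra_simps)
    have hA: "h * A \<le> 1" unfolding A_def by (rule step_total_rate_le_one[OF I h])
    have R: "\<bar>h * R\<bar> \<le> h * (A * c + La * c)"
      using sum_jump_term_fun_upd[OF L c x k v] h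
      unfolding R_def A_def D_def I_def by (simp add: abs_mult mult_left_mono)
    have "\<bar>?T x k - ?T (x(k:=v)) k\<bar> \<le> 2 * ((Ps + La) * c)"
      using jump_term_bound[OF L x k] jump_term_bound[OF L y k] by linarith
    then have T: "\<bar>h * (?T x k - ?T (x(k:=v)) k)\<bar> \<le> h * (2 * ((Ps + La) * c))"
      using h by (simp add: abs_mult mult_left_mono)
    have "\<bar>D * (1 - h * A)\<bar> \<le> c * (1 - h * A)"
      using bounded_differencesD[OF L x y] hA unfolding D_def by (simp add: abs_mult mult_right_mono)
    then have "\<bar>?K x - ?K (x(k:=v))\<bar> \<le> c * (1 - h * A) + h * (A * c + La * c) + h * (2 * ((Ps + La) * c))"
      unfolding diff using R T by linarith
    also have "\<dots> = (1 + h * (2 * Ps + 3 * La)) * c" by (simp add: algebra_simps)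
    finally show ?thesis .
  qed
qed

lemma bounded_differences_euler_pow:
  assumes L: "bounded_differences (sir_states N) F c" and c: "0 \<le> c"
    and h: "0 \<le> h" "h * real N * (Ps + La) \<le> 1"
  shows "bounded_differences (sir_states N) ((kernel_fun (sir_states N) (euler_kernel lam psi N h) ^^ j) F)
           ((1 + h * (2 * Ps + 3 * La)) ^ j * c)"
proof (induction j)
  case 0
  then show ?case using L by simp
next
  case (Suc j)
  have "0 \<le> (1 + h * (2 * Ps + 3 * La)) ^ j * c" using h c Ps_nonneg La_nonneg by simp
  from bounded_differences_euler[OF Suc.IH this h] show ?case by (simp add: algebra_simps)
qed

end

section \<open>Variance under the initial product law\<close>

definition init_weight :: "(real \<Rightarrow> real) \<Rightarrow> nat \<Rightarrow> nat \<Rightarrow> nat \<Rightarrow> int \<Rightarrow> real" where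
  "init_weight phi N m i v =
     (if i \<le> m then (if v = 1 then phi (real i / real N) else if v = 0 then 1 - phi (real i / real N) else 0)
      else (if v = 0 then 1 else 0))"

definition init_partial :: "(real \<Rightarrow> real) \<Rightarrow> nat \<Rightarrow> nat \<Rightarrow> (nat \<Rightarrow> int) \<Rightarrow> real" where
  "init_partial phi N m x = (\<Prod>i\<in>{1..N}. init_weight phi N m i (x i))"

definition resample :: "(real \<Rightarrow> real) \<Rightarrow> nat \<Rightarrow> nat \<Rightarrow> ((nat \<Rightarrow> int) \<Rightarrow> real) \<Rightarrow> (nat \<Rightarrow> int) \<Rightarrow> real" where
  "resample phi N k G x =
     phi (real k / real N) * G (x(k:=1)) + (1 - phi (real k / real N)) * G (x(k:=0))"

lemma init_partial_eq_sir_init: "init_partial phi N N x = sir_init phi N x"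
  unfolding init_partial_def sir_init_def init_weight_def by (rule prod.cong) auto

lemma sum_fun_upd_site:
  assumes k: "k \<in> {1..N}" and u: "u \<in> {-1,0,1}"
  shows "(\<Sum>x\<in>sir_states N. if x k = 0 then H (x(k:=u)) else (0::real))
       = (\<Sum>x\<in>sir_states N. if x k = u then H x else 0)"
proof -
  let ?S = "sir_states N"
  have "(\<Sum>x\<in>?S. if x k = 0 then H (x(k:=u)) else 0) = (\<Sum>x\<in>{x\<in>?S. x k = 0}. H (x(k:=u)))"
    using finite_sir_states by (simp add: sum.inter_filter)
  also have "\<dots> = (\<Sum>x\<in>{x\<in>?S. x k = u}. H x)"
  proof (rule sum.reindex_bij_witness[of _ "\<lambda>y. y(k:=0)" "\<lambda>x. x(k:=u)"])
    fix a assume a: "a \<in> {x\<in>?S. x k = u}"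
    show "(a(k:=0))(k:=u) = a" using a by auto
    show "a(k:=0) \<in> {x\<in>?S. x k = 0}" using a fun_upd_in_sir_states[OF _ k, of a 0] by auto
  next
    fix a assume a: "a \<in> {x\<in>?S. x k = 0}"
    show "(a(k:=u))(k:=0) = a" using a by auto
    show "a(k:=u) \<in> {x\<in>?S. x k = u}" using a fun_upd_in_sir_states[OF _ k u, of a] by auto
    show "H (a(k:=u)) = H (a(k:=u))" ..
  qed
  also have "\<dots> = (\<Sum>x\<in>?S. if x k = u then H x else 0)"
    using finite_sir_states by (simp add: sum.inter_filter)
  finally show ?thesis .
qed

lemma init_partial_split_site:
  fixes phi :: "real \<Rightarrow> real"
  assumes k: "k = Suc m" "k \<le> N"
  defines "P x \<equiv> (\<Prod>i\<in>{1..N} - {k}. init_weight phi N m i (x i))"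
    and "p \<equiv> phi (real k / real N)"
  shows "init_partial phi N k x = (p * (if x k = 1 then 1 else 0) + (1 - p) * (if x k = 0 then 1 else 0)) * P x"
    and "init_partial phi N m x = (if x k = 0 then 1 else 0) * P x"
proof -
  have k_in: "k \<in> {1..N}" using k by auto
  have "(\<Prod>i\<in>{1..N} - {k}. init_weight phi N k i (x i)) = P x"
    unfolding P_def init_weight_def k(1) by (rule prod.cong) auto
  then show "init_partial phi N k x = (p * (if x k = 1 then 1 else 0) + (1 - p) * (if x k = 0 then 1 else 0)) * P x"
    unfolding init_partial_def prod.remove[OF finite_atLeastAtMost k_in] by (auto simp: init_weight_def p_def)
  show "init_partial phi N m x = (if x k = 0 then 1 else 0) * P x"
    unfolding init_partial_def prod.remove[OF finite_atLeastAtMost k_in] P_def using k(1)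
    by (simp add: init_weight_def)
qed

lemma expect_init_partial_Suc:
  assumes m: "Suc m \<le> N"
  shows "expect_on (sir_states N) (init_partial phi N (Suc m)) G
           = expect_on (sir_states N) (init_partial phi N m) (resample phi N (Suc m) G)"
proof -
  let ?S = "sir_states N"
  define k where "k = Suc m"
  have k: "k \<in> {1..N}" using m k_def by auto
  define p where "p = phi (real k / real N)"
  define P where "P x = (\<Prod>i\<in>{1..N}-{k}. init_weight phi N m i (x i))" for x
  have P_upd: "P (x(k:=u)) = P x" for x u unfolding P_def by (rule prod.cong) auto
  note init_k = init_partial_split_site[OF k_def m[folded k_def]]
  have "expect_on ?S (init_partial phi N k) G
      = p * (\<Sum>x\<in>?S. if x k = 1 then P x * G x else 0) + (1 - p) * (\<Sum>x\<in>?S. if x k = 0 then P x * G x else 0)"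
  proof -
    have "expect_on ?S (init_partial phi N k) G
        = (\<Sum>x\<in>?S. p * (if x k = 1 then P x * G x else 0) + (1 - p) * (if x k = 0 then P x * G x else 0))"
      unfolding expect_on_def init_k(1) by (rule sum.cong) (auto simp: p_def P_def)
    then show ?thesis by (simp add: sum.distrib sum_distrib_left)
  qed
  also have "(\<Sum>x\<in>?S. if x k = 1 then P x * G x else 0) = (\<Sum>x\<in>?S. if x k = 0 then P (x(k:=1)) * G (x(k:=1)) else 0)"
    using sum_fun_upd_site[OF k, of 1 "\<lambda>x. P x * G x"] by simp
  also have "\<dots> = (\<Sum>x\<in>?S. if x k = 0 then P x * G (x(k:=1)) else 0)"
    by (rule sum.cong[OF refl]) (metis P_upd)
  also have "(\<Sum>x\<in>?S. if x k = 0 then P x * G x else 0) = (\<Sum>x\<in>?S. if x k = 0 then P x * G (x(k:=0)) else 0)"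
    by (rule sum.cong[OF refl]) (metis fun_upd_triv)
  also have "p * (\<Sum>x\<in>?S. if x k = 0 then P x * G (x(k:=1)) else 0)
        + (1 - p) * (\<Sum>x\<in>?S. if x k = 0 then P x * G (x(k:=0)) else 0)
      = expect_on ?S (init_partial phi N m) (resample phi N k G)"
  proof -
    have "expect_on ?S (init_partial phi N m) (resample phi N k G)
        = (\<Sum>x\<in>?S. p * (if x k = 0 then P x * G (x(k:=1)) else 0) + (1 - p) * (if x k = 0 then P x * G (x(k:=0)) else 0))"
      unfolding expect_on_def init_k(2) resample_def by (rule sum.cong) (auto simp: p_def P_def algebra_simps)
    then show ?thesis by (simp add: sum.distrib sum_distrib_left)
  qed
  finally show ?thesis by (simp only: k_def)
qed

lemma expect_init_partial_0: "expect_on (sir_states N) (init_partial phi N 0) G = G (\<lambda>_. 0)"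
proof -
  have e: "init_partial phi N 0 x = (if x = (\<lambda>_. 0) then 1 else 0)" if x: "x \<in> sir_states N" for x
  proof (cases "x = (\<lambda>_. 0)")
    case True
    then show ?thesis unfolding init_partial_def init_weight_def by simp
  next
    case False
    then obtain i where "x i \<noteq> 0" by auto
    then have i: "i \<in> {1..N}" using x unfolding sir_states_def by auto
    have "init_partial phi N 0 x = 0" unfolding init_partial_def
      by (rule prod_zero) (use i \<open>x i \<noteq> 0\<close> in \<open>auto simp: init_weight_def\<close>)
    then show ?thesis using False by simp
  qed
  have "expect_on (sir_states N) (init_partial phi N 0) G = (\<Sum>x\<in>sir_states N. if x = (\<lambda>_. 0) then G x else 0)"
    unfolding expect_on_def by (rule sum.cong) (auto simp: e)
  then show ?thesis using finite_sir_states zero_in_sir_states by simp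
qed

lemma expect_init_partial_one: "m \<le> N \<Longrightarrow> expect_on (sir_states N) (init_partial phi N m) (\<lambda>_. 1) = 1"
proof (induction m)
  case 0
  then show ?case by (simp add: expect_init_partial_0)
next
  case (Suc m)
  have "resample phi N (Suc m) (\<lambda>_. 1) = (\<lambda>_. 1)" unfolding resample_def by auto
  then show ?case using expect_init_partial_Suc[OF Suc.prems] Suc by simp
qed

context
  fixes phi :: "real \<Rightarrow> real" and N :: nat
  assumes phi_prob: "\<forall>x\<in>{0..1}. 0 \<le> phi x \<and> phi x \<le> 1"
begin

lemma init_weight_nonneg: "i \<in> {1..N} \<Longrightarrow> 0 \<le> init_weight phi N m i v"
  using phi_prob grid_point_in_unit[of i N] unfolding init_weight_def by auto

lemma init_partial_nonneg: "0 \<le> init_partial phi N m x"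
  unfolding init_partial_def by (rule prod_nonneg) (auto intro: init_weight_nonneg)

lemma prob_vector_init_partial: "m \<le> N \<Longrightarrow> prob_vector (sir_states N) (init_partial phi N m)"
  using expect_init_partial_one[of m] init_partial_nonneg unfolding prob_vector_def expect_on_def by simp

lemma bounded_differences_resample:
  assumes k: "k \<in> {1..N}" and L: "bounded_differences (sir_states N) G c" and c: "0 \<le> c"
  shows "bounded_differences (sir_states N) (resample phi N k G) c"
  unfolding bounded_differences_def
proof (intro ballI allI impI)
  fix x j v assume x: "x \<in> sir_states N" and y: "x(j:=v) \<in> sir_states N"
  define p where "p = phi (real k / real N)"
  have p: "0 \<le> p" "p \<le> 1" using phi_prob grid_point_in_unit[OF k] unfolding p_def by auto
  show "\<bar>resample phi N k G x - resample phi N k G (x(j:=v))\<bar> \<le> c"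
  proof (cases "x(j:=v) = x")
    case True then show ?thesis using c by simp
  next
    case False
    have j: "j \<in> {1..N}" and v: "v \<in> {-1,0,1}" using sir_states_fun_upd_site[OF x y False] by auto
    show ?thesis
    proof (cases "j = k")
      case True then show ?thesis using c unfolding resample_def by simp
    next
      case jk: False
      have tw: "(x(j:=v))(k:=u) = (x(k:=u))(j:=v)" for u using jk by (simp add: fun_upd_twist)
      have d1: "\<bar>G (x(k:=1)) - G ((x(j:=v))(k:=1))\<bar> \<le> c"
        unfolding tw by (rule bounded_differencesD[OF L fun_upd_in_sir_states[OF x k] fun_upd_in_sir_states[OF fun_upd_in_sir_states[OF x k] j v]]) auto
      have d0: "\<bar>G (x(k:=0)) - G ((x(j:=v))(k:=0))\<bar> \<le> c"
        unfolding tw by (rule bounded_differencesD[OF L fun_upd_in_sir_states[OF x k] fun_upd_in_sir_states[OF fun_upd_in_sir_states[OF x k] j v]]) auto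
      have "resample phi N k G x - resample phi N k G (x(j:=v))
          = p * (G (x(k:=1)) - G ((x(j:=v))(k:=1))) + (1 - p) * (G (x(k:=0)) - G ((x(j:=v))(k:=0)))"
        unfolding resample_def p_def by (simp add: algebra_simps)
      also have "\<bar>\<dots>\<bar> \<le> p * c + (1 - p) * c"
        using d1 d0 p by (intro order_trans[OF abs_triangle_ineq] add_mono) (auto simp: abs_mult intro!: mult_left_mono)
      finally show ?thesis by (simp add: algebra_simps)
    qed
  qed
qed

lemma resample_cond_variance_le:
  assumes x: "x \<in> sir_states N" and k: "k \<in> {1..N}" and L: "bounded_differences (sir_states N) G c"
  shows "resample phi N k (\<lambda>y. (G y)\<^sup>2) x - (resample phi N k G x)\<^sup>2 \<le> c\<^sup>2"
proof -
  define p where "p = phi (real k / real N)"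
  have p: "0 \<le> p" "p \<le> 1" using phi_prob grid_point_in_unit[OF k] unfolding p_def by auto
  define a where "a = G (x(k:=1))"
  define b where "b = G (x(k:=0))"
  have "\<bar>a - b\<bar> \<le> c" unfolding a_def b_def
    using bounded_differencesD[OF L fun_upd_in_sir_states[OF x k, of 1], of k 0] fun_upd_in_sir_states[OF x k, of 0] by simp
  then have ab: "(a - b)\<^sup>2 \<le> c\<^sup>2" by (rule square_le_of_abs_le)
  have e: "resample phi N k (\<lambda>y. (G y)\<^sup>2) x - (resample phi N k G x)\<^sup>2 = (p * (1 - p)) * (a - b)\<^sup>2"
    unfolding resample_def p_def[symmetric] a_def[symmetric] b_def[symmetric] by (simp add: power2_eq_square algebra_simps)
  have "p * (1 - p) \<le> 1" using p by (intro mult_le_one) auto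
  moreover have "0 \<le> p * (1 - p)" using p by simp
  ultimately have "(p * (1 - p)) * (a - b)\<^sup>2 \<le> 1 * (a - b)\<^sup>2" by (intro mult_right_mono) auto
  then show ?thesis unfolding e using ab by simp
qed

lemma variance_init_partial_le:
  assumes "m \<le> N" "bounded_differences (sir_states N) G c" "0 \<le> c"
  shows "variance_on (sir_states N) (init_partial phi N m) G \<le> real m * c\<^sup>2"
  using assms
proof (induction m arbitrary: G)
  case 0
  then show ?case unfolding variance_on_def expect_init_partial_0 by simp
next
  case (Suc m)
  let ?S = "sir_states N" and ?\<nu> = "init_partial phi N m" and ?R = "resample phi N (Suc m)"
  have k: "Suc m \<in> {1..N}" using Suc.prems by auto
  have "variance_on ?S (init_partial phi N (Suc m)) G
      = variance_on ?S ?\<nu> (?R G) + expect_on ?S ?\<nu> (\<lambda>x. ?R (\<lambda>y. (G y)\<^sup>2) x - (?R G x)\<^sup>2)"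
    by (rule law_of_total_variance[OF expect_init_partial_Suc[OF Suc.prems(1)]])
  also have "expect_on ?S ?\<nu> (\<lambda>x. ?R (\<lambda>y. (G y)\<^sup>2) x - (?R G x)\<^sup>2) \<le> c\<^sup>2"
    using Suc.prems resample_cond_variance_le[OF _ k Suc.prems(2)]
    by (intro expect_le_const[OF prob_vector_init_partial]) auto
  also have "variance_on ?S ?\<nu> (?R G) \<le> real m * c\<^sup>2"
    using Suc.prems bounded_differences_resample[OF k] by (intro Suc.IH) auto
  finally show ?case by (simp add: algebra_simps)
qed
end

lemma bounded_differences_empirical:
  fixes g :: "int \<Rightarrow> real"
  assumes g: "\<And>a b. \<bar>g a - g b\<bar> \<le> 1" and f: "\<forall>x\<in>{0..1}. \<bar>f x\<bar> \<le> Phi"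
  shows "bounded_differences S (\<lambda>x. (1 / real N) * (\<Sum>i\<in>{1..N}. g (x i) * f (real i / real N))) (Phi / real N)"
  unfolding bounded_differences_def
proof (intro ballI allI impI)
  fix x k v
  have Phi0: "0 \<le> Phi" using f by (meson atLeastAtMost_iff abs_ge_zero order_trans order_refl zero_le_one)
  let ?s = "\<lambda>x. (\<Sum>i\<in>{1..N}. g (x i) * f (real i / real N))"
  have "\<bar>?s x - ?s (x(k:=v))\<bar> \<le> Phi"
  proof (cases "k \<in> {1..N}")
    case False
    then have "?s (x(k:=v)) = ?s x" by (intro sum.cong) auto
    then show ?thesis using Phi0 by simp
  next
    case True
    have "?s x - ?s (x(k:=v)) = (\<Sum>i\<in>{1..N}. g (x i) * f (real i / real N) - g ((x(k:=v)) i) * f (real i / real N))"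
      by (simp add: sum_subtractf)
    also have "\<dots> = (g (x k) * f (real k / real N) - g v * f (real k / real N))
        + (\<Sum>i\<in>{1..N} - {k}. g (x i) * f (real i / real N) - g ((x(k:=v)) i) * f (real i / real N))"
      using True by (simp add: sum.remove)
    also have "(\<Sum>i\<in>{1..N} - {k}. g (x i) * f (real i / real N) - g ((x(k:=v)) i) * f (real i / real N)) = 0"
      by (intro sum.neutral) auto
    finally have e: "?s x - ?s (x(k:=v)) = (g (x k) - g v) * f (real k / real N)" by (simp add: algebra_simps)
    have "\<bar>(g (x k) - g v) * f (real k / real N)\<bar> \<le> 1 * Phi"
      unfolding abs_mult using g[of "x k" v] f grid_point_in_unit[OF True] Phi0 by (intro mult_mono) auto
    then show ?thesis unfolding e by simp
  qed
  then have "(1 / real N) * \<bar>?s x - ?s (x(k:=v))\<bar> \<le> (1 / real N) * Phi"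
    by (intro mult_left_mono) auto
  moreover have "\<bar>(1 / real N) * ?s x - (1 / real N) * ?s (x(k:=v))\<bar> = (1 / real N) * \<bar>?s x - ?s (x(k:=v))\<bar>"
    by (subst right_diff_distrib[symmetric], subst abs_mult) simp
  ultimately show "\<bar>(1 / real N) * ?s x - (1 / real N) * ?s (x(k:=v))\<bar> \<le> Phi / real N"
    by simp
qed

lemma bounded_differences_mu_emp: "\<forall>x\<in>{0..1}. \<bar>f x\<bar> \<le> Phi \<Longrightarrow> bounded_differences S (mu_emp N f) (Phi / real N)"
  using bounded_differences_empirical[of "\<lambda>u. if u = 1 then 1 else 0" f Phi S N] unfolding mu_emp_def[abs_def] by simp

lemma bounded_differences_theta_emp: "\<forall>x\<in>{0..1}. \<bar>f x\<bar> \<le> Phi \<Longrightarrow> bounded_differences S (theta_emp N f) (Phi / real N)"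
  using bounded_differences_empirical[of "\<lambda>u. if u = 0 then 1 else 0" f Phi S N] unfolding theta_emp_def[abs_def] by simp

section \<open>Variance bounds for the SIR chain\<close>

definition euler_law :: "(real \<Rightarrow> real \<Rightarrow> real) \<Rightarrow> (real \<Rightarrow> real) \<Rightarrow> (real \<Rightarrow> real) \<Rightarrow> nat \<Rightarrow> real \<Rightarrow> nat
    \<Rightarrow> (nat \<Rightarrow> int) \<Rightarrow> real" where
  "euler_law lam psi phi N t n =
     dist_pow (sir_states N) (euler_kernel lam psi N (t / real n)) (init_partial phi N N) n"

lemma expect_euler_tendsto:
  "(\<lambda>n. expect_on (sir_states N) (euler_law lam psi phi N t n) G)
     \<longlonglongrightarrow> sir_expect lam psi phi N t G"
proof -
  let ?S = "sir_states N"
  have e: "expect_on ?S (euler_law lam psi phi N t n) G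
      = (\<Sum>x\<in>?S. \<Sum>y\<in>?S. init_partial phi N N x * matpow ?S (euler_kernel lam psi N (t / real n)) n x y * G y)" for n
    unfolding expect_on_def euler_law_def dist_pow_def by (simp add: sum_distrib_right) (rule sum.swap)
  have "(\<lambda>n. \<Sum>x\<in>?S. \<Sum>y\<in>?S. init_partial phi N N x * matpow ?S (euler_kernel lam psi N (t / real n)) n x y * G y)
      \<longlonglongrightarrow> (\<Sum>x\<in>?S. \<Sum>y\<in>?S. init_partial phi N N x * sir_trans lam psi N t x y * G y)"
  proof (intro tendsto_sum tendsto_mult tendsto_const)
    fix x y assume "y \<in> ?S"
    then show "(\<lambda>n. matpow ?S (euler_kernel lam psi N (t / real n)) n x y) \<longlonglongrightarrow> sir_trans lam psi N t x y"
      unfolding euler_kernel_def[abs_def] sir_trans_def by (rule matpow_euler_tendsto[OF finite_sir_states])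
  qed
  then show ?thesis unfolding e sir_expect_def init_partial_eq_sir_init .
qed

lemma variance_euler_tendsto:
  "(\<lambda>n. variance_on (sir_states N) (euler_law lam psi phi N t n) F)
     \<longlonglongrightarrow> sir_var lam psi phi N t F"
  unfolding variance_on_def sir_var_def by (intro tendsto_intros expect_euler_tendsto)

lemma eventually_euler_step_small:
  "\<forall>\<^sub>F n in sequentially. 1 \<le> n \<and> t / real n * real N * r \<le> 1"
proof (rule eventually_sequentiallyI[of "nat \<lceil>t * real N * r\<rceil> + 1"])
  fix n assume n: "nat \<lceil>t * real N * r\<rceil> + 1 \<le> n"
  then have "t * real N * r \<le> real n" by linarith
  then show "1 \<le> n \<and> t / real n * real N * r \<le> 1" using n by (simp add: field_simps)
qed

context sir_bounded_rates
begin

lemma variance_euler_le: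
  assumes phi_prob: "\<forall>x\<in>{0..1}. 0 \<le> phi x \<and> phi x \<le> 1"
    and L: "bounded_differences (sir_states N) F c" and c: "0 \<le> c" and t: "0 \<le> t"
    and n: "1 \<le> n" and h: "t / real n * real N * (Ps + La) \<le> 1"
  shows "variance_on (sir_states N) (euler_law lam psi phi N t n) F
           \<le> real N * (exp ((2 * Ps + 3 * La) * t) * c)\<^sup>2 * (1 + t * (Ps + La))"
proof -
  let ?S = "sir_states N"
  define h where "h = t / real n"
  define C where "C = 2 * Ps + 3 * La"
  define c' where "c' = exp (C * t) * c"
  let ?K = "euler_kernel lam psi N h"
  have h0: "0 \<le> h" and nh: "real n * h = t" and hN: "h * real N * (Ps + La) \<le> 1"
    using t n h unfolding h_def by auto
  have C0: "0 \<le> C" unfolding C_def using Ps_nonneg La_nonneg by simp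
  have L': "bounded_differences ?S ((kernel_fun ?S ?K ^^ j) F) c'" if "j \<le> n" for j
  proof (rule bounded_differences_mono[OF bounded_differences_euler_pow[OF L c h0 hN, of j]])
    have "(1 + h * C) ^ j \<le> (1 + h * C) ^ n" by (rule power_increasing[OF that]) (use h0 C0 in simp)
    also have "\<dots> \<le> exp (h * C) ^ n" by (rule power_mono) (use h0 C0 in auto)
    also have "\<dots> = exp (C * t)" by (simp add: exp_of_nat_mult[symmetric] nh[symmetric] algebra_simps)
    finally show "(1 + h * (2 * Ps + 3 * La)) ^ j * c \<le> c'"
      unfolding c'_def C_def using c by (simp add: mult_right_mono)
  qed
  have c'0: "0 \<le> c'" unfolding c'_def using c by simp
  have "variance_on ?S (dist_pow ?S ?K (init_partial phi N N) n) F
      \<le> variance_on ?S (init_partial phi N N) ((kernel_fun ?S ?K ^^ n) F) + real n * (h * real N * (Ps + La) * c'\<^sup>2)"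
    using euler_cond_variance_le[OF _ L' h0]
    by (intro variance_dist_pow_le finite_sir_states prob_vector_init_partial[OF phi_prob]
        stochastic_euler_kernel[OF h0 hN]) auto
  also have "variance_on ?S (init_partial phi N N) ((kernel_fun ?S ?K ^^ n) F) \<le> real N * c'\<^sup>2"
    by (rule variance_init_partial_le[OF phi_prob order_refl L'[OF order_refl] c'0])
  finally show ?thesis
    unfolding euler_law_def h_def[symmetric] c'_def[symmetric] C_def[symmetric]
    by (simp add: nh[symmetric] algebra_simps)
qed

lemma sir_var_nonneg:
  assumes phi_prob: "\<forall>x\<in>{0..1}. 0 \<le> phi x \<and> phi x \<le> 1" and t: "0 \<le> t"
  shows "0 \<le> sir_var lam psi phi N t F"
proof (rule tendsto_lowerbound[OF variance_euler_tendsto])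
  show "\<forall>\<^sub>F n in sequentially. 0 \<le> variance_on (sir_states N) (euler_law lam psi phi N t n) F"
    using eventually_euler_step_small[of t N "Ps + La"]
  proof (rule eventually_mono)
    fix n assume "1 \<le> n \<and> t / real n * real N * (Ps + La) \<le> 1"
    then have "stochastic_on (sir_states N) (euler_kernel lam psi N (t / real n))"
      using t by (intro stochastic_euler_kernel) auto
    then show "0 \<le> variance_on (sir_states N) (euler_law lam psi phi N t n) F"
      unfolding euler_law_def
      by (intro variance_nonneg prob_vector_dist_pow finite_sir_states prob_vector_init_partial[OF phi_prob]) auto
  qed
qed simp

lemma sir_var_le:
  assumes phi_prob: "\<forall>x\<in>{0..1}. 0 \<le> phi x \<and> phi x \<le> 1"
    and L: "bounded_differences (sir_states N) F c" and c: "0 \<le> c" and t: "0 \<le> t"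
  shows "sir_var lam psi phi N t F \<le> real N * (exp ((2 * Ps + 3 * La) * t) * c)\<^sup>2 * (1 + t * (Ps + La))"
proof (rule tendsto_upperbound[OF variance_euler_tendsto])
  show "\<forall>\<^sub>F n in sequentially. variance_on (sir_states N) (euler_law lam psi phi N t n) F
        \<le> real N * (exp ((2 * Ps + 3 * La) * t) * c)\<^sup>2 * (1 + t * (Ps + La))"
    using eventually_euler_step_small[of t N "Ps + La"]
    by (rule eventually_mono) (intro variance_euler_le[OF phi_prob L c t]; simp)
qed simp

lemma sir_var_tendsto_zero:
  assumes phi_prob: "\<forall>x\<in>{0..1}. 0 \<le> phi x \<and> phi x \<le> 1"
    and L: "\<And>N. bounded_differences (sir_states N) (F N) (Phi / real N)" and Phi: "0 \<le> Phi" and t: "0 \<le> t"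
  shows "(\<lambda>N. sir_var lam psi phi N t (F N)) \<longlonglongrightarrow> 0"
proof (rule tendsto_sandwich[OF _ _ tendsto_const lim_const_over_n])
  define B where "B = (exp ((2 * Ps + 3 * La) * t) * Phi)\<^sup>2 * (1 + t * (Ps + La))"
  have "sir_var lam psi phi N t (F N) \<le> B / real N" if "1 \<le> N" for N
  proof -
    have "sir_var lam psi phi N t (F N) \<le> real N * (exp ((2 * Ps + 3 * La) * t) * (Phi / real N))\<^sup>2 * (1 + t * (Ps + La))"
      using Phi by (intro sir_var_le[OF phi_prob L _ t]) simp
    also have "\<dots> = B / real N" unfolding B_def using that by (simp add: power2_eq_square field_simps)
    finally show ?thesis .
  qed
  then show "\<forall>\<^sub>F N in sequentially. sir_var lam psi phi N t (F N) \<le> B / real N"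
    by (auto intro: eventually_sequentiallyI[of 1])
  show "\<forall>\<^sub>F N in sequentially. 0 \<le> sir_var lam psi phi N t (F N)"
    using sir_var_nonneg[OF phi_prob t] by simp
qed

end

lemma continuous_on_compact_abs_bound:
  fixes g :: "'a::topological_space \<Rightarrow> real"
  assumes "continuous_on S g" "compact S"
  obtains B where "\<forall>x\<in>S. \<bar>g x\<bar> \<le> B"
  using compact_imp_bounded[OF compact_continuous_image[OF assms]] unfolding bounded_iff by auto

theorem lemma4p1:
  fixes lam :: "real \<Rightarrow> real \<Rightarrow> real" and psi phi f :: "real \<Rightarrow> real" and t :: real
  assumes lam_cont: "continuous_on ({0..1} \<times> {0..1}) (\<lambda>(x, y). lam x y)"
    and lam_pos: "\<forall>x\<in>{0..1}. \<forall>y\<in>{0..1}. lam x y > 0"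
    and psi_cont: "continuous_on {0..1} psi"
    and psi_pos: "\<forall>x\<in>{0..1}. psi x > 0"
    and phi_cont: "continuous_on {0..1} phi"
    and phi_prob: "\<forall>x\<in>{0..1}. 0 \<le> phi x \<and> phi x \<le> 1"
    and f_cont: "continuous_on {0..1} f"
    and t_nonneg: "t \<ge> 0"
  shows "(\<lambda>N. sir_var lam psi phi N t (mu_emp N f)) \<longlonglongrightarrow> 0
         \<and> (\<lambda>N. sir_var lam psi phi N t (theta_emp N f)) \<longlonglongrightarrow> 0"
proof -
  obtain Ps where Ps: "\<forall>x\<in>{0..1}. \<bar>psi x\<bar> \<le> Ps"
    using continuous_on_compact_abs_bound[OF psi_cont compact_Icc] .
  obtain La where La: "\<forall>z\<in>{0..1} \<times> {0..1}. \<bar>(\<lambda>(x, y). lam x y) z\<bar> \<le> La"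
    using continuous_on_compact_abs_bound[OF lam_cont compact_Times[OF compact_Icc compact_Icc]] .
  obtain Phi where Phi: "\<forall>x\<in>{0..1}. \<bar>f x\<bar> \<le> Phi"
    using continuous_on_compact_abs_bound[OF f_cont compact_Icc] .
  have "\<forall>x\<in>{0..1}. 0 \<le> psi x \<and> psi x \<le> Ps"
    using Ps psi_pos abs_le_D1 less_imp_le by blast
  moreover have "\<forall>x\<in>{0..1}. \<forall>y\<in>{0..1}. 0 \<le> lam x y \<and> lam x y \<le> La"
  proof (intro ballI conjI)
    fix x y :: real assume "x \<in> {0..1}" "y \<in> {0..1}"
    then show "0 \<le> lam x y" "lam x y \<le> La"
      using lam_pos[rule_format, of x y] La[rule_format, of "(x, y)"] by (auto dest: abs_le_D1)
  qed
  ultimately interpret sir_bounded_rates lam psi Ps La by unfold_locales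
  have Phi0: "0 \<le> Phi" using Phi[rule_format, of 0] by simp
  show ?thesis
    by (intro conjI sir_var_tendsto_zero[OF phi_prob _ Phi0 t_nonneg]
        bounded_differences_mu_emp[OF Phi] bounded_differences_theta_emp[OF Phi])
qed

end
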